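(* There are infinitely many (pairwise non-isomorphic) finite simple graphs $G$ such that $v(G) \equiv 0 \pmod 6$, $G$ is 2-connected, cubic, bipartite, and planar, and $G$ has no $\Lambda$-factor.
   Context: Graphs are finite, undirected, without loops or multiple edges; $v(G)=|V(G)|$. $\Lambda$ denotes the path on 3 vertices. A $\Lambda$-factor of $G$ is a spanning subgraph of $G$ each of whose connected components is a 3-vertex path. *)

theory Defs
  imports "HOL-Analysis.Analysis"
begin

type_synonym 'a graph = "'a set \<times> 'a set set"

definition simple_graph :: "'a graph \<Rightarrow> bool" where
  "simple_graph G \<longleftrightarrow> finite (fst G) \<and>
     (\<forall>e\<in>snd G. \<exists>u v. u \<noteq> v \<and> u \<in> fst G \<and> v \<in> fst G \<and> e = {u, v})"

definition reach :: "'a set set \<Rightarrow> 'a \<Rightarrow> 'a \<Rightarrow> bool" where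
  "reach E = (\<lambda>u v. {u, v} \<in> E)\<^sup>*\<^sup>*"

definition connected_graph :: "'a graph \<Rightarrow> bool" where
  "connected_graph G \<longleftrightarrow> fst G \<noteq> {} \<and> (\<forall>u\<in>fst G. \<forall>v\<in>fst G. reach (snd G) u v)"

definition delete_vertex :: "'a graph \<Rightarrow> 'a \<Rightarrow> 'a graph" where
  "delete_vertex G x = (fst G - {x}, {e\<in>snd G. x \<notin> e})"

definition two_connected :: "'a graph \<Rightarrow> bool" where
  "two_connected G \<longleftrightarrow> card (fst G) > 2 \<and> connected_graph G \<and>
     (\<forall>x\<in>fst G. connected_graph (delete_vertex G x))"

definition degree :: "'a graph \<Rightarrow> 'a \<Rightarrow> nat" where
  "degree G v = card {e\<in>snd G. v \<in> e}"

definition cubic :: "'a graph \<Rightarrow> bool" where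
  "cubic G \<longleftrightarrow> (\<forall>v\<in>fst G. degree G v = 3)"

definition bipartite :: "'a graph \<Rightarrow> bool" where
  "bipartite G \<longleftrightarrow> (\<exists>A\<subseteq>fst G. \<forall>e\<in>snd G. card (e \<inter> A) = 1)"

definition planar :: "'a graph \<Rightarrow> bool" where
  "planar G \<longleftrightarrow> (\<exists>(p :: 'a \<Rightarrow> real^2) (\<gamma> :: 'a set \<Rightarrow> real \<Rightarrow> real^2).
     inj_on p (fst G) \<and>
     (\<forall>e\<in>snd G. arc (\<gamma> e) \<and> {pathstart (\<gamma> e), pathfinish (\<gamma> e)} = p ` e \<and>
                 path_image (\<gamma> e) \<inter> p ` fst G \<subseteq> p ` e) \<and>
     (\<forall>e\<in>snd G. \<forall>e'\<in>snd G. e \<noteq> e' \<longrightarrow>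
                 path_image (\<gamma> e) \<inter> path_image (\<gamma> e') \<subseteq> p ` (e \<inter> e')))"

text \<open>A \<Lambda>-factor: a spanning subgraph (V, F), F \<subseteq> E, each of whose connected
  components is a path a - b - c on three vertices.\<close>
definition has_Lambda_factor :: "'a graph \<Rightarrow> bool" where
  "has_Lambda_factor G \<longleftrightarrow> (\<exists>F\<subseteq>snd G. \<forall>v\<in>fst G. \<exists>a b c.
      a \<noteq> b \<and> b \<noteq> c \<and> a \<noteq> c \<and> v \<in> {a, b, c} \<and>
      {w\<in>fst G. reach F v w} = {a, b, c} \<and>
      {e\<in>F. e \<subseteq> {a, b, c}} = {{a, b}, {b, c}})"

definition graph_iso :: "'a graph \<Rightarrow> 'b graph \<Rightarrow> bool" where
  "graph_iso G H \<longleftrightarrow> (\<exists>f. bij_betw f (fst G) (fst H) \<and>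
     (\<forall>u\<in>fst G. \<forall>v\<in>fst G. {u, v} \<in> snd G \<longleftrightarrow> {f u, f v} \<in> snd H))"

end

theory Submission
  imports Defs
begin

(* The graphs are rings of k copies of one 26-vertex block. A block has two hubs (residues 0 and
   17) and three 8-vertex gadgets, each joined to two hubs by its end vertices. Deleting the 2k
   hubs leaves 3k gadgets of 8 \<equiv> 2 (mod 3) vertices, so a \<Lambda>-factor would need paths through
   the hubs covering at least 6k gadget vertices, while each hub lies on one path covering at most
   two of them. Numbering the vertices 0, ..., 26k - 1 block by block, every
   inner vertex has a smaller and a larger neighbour, which gives 2-connectivity, and all edges
   can be drawn as arches above or below a line without crossings, which gives planarity. All
   offsets along the numbering are odd, so the graph is bipartite, and k = 3(j + 1) makes the
   number of vertices divisible by 6. *)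

section \<open>Connectivity\<close>

lemma reach_refl: "reach E u u"
  by (simp add: reach_def)

lemma reach_edge: "{u, w} \<in> E \<Longrightarrow> reach E u w"
  by (simp add: reach_def r_into_rtranclp)

lemma reach_trans: "reach E u v \<Longrightarrow> reach E v w \<Longrightarrow> reach E u w"
  unfolding reach_def by (rule rtranclp_trans)

lemma reach_sym: "reach E u v \<Longrightarrow> reach E v u"
proof -
  have "symp (\<lambda>u v. {u, v} \<in> E)" by (auto simp: symp_def insert_commute)
  then show "reach E u v \<Longrightarrow> reach E v u" unfolding reach_def by (metis sympD symp_rtranclp)
qed

lemma connected_graphI:
  assumes "V \<noteq> {}" and "\<And>v. v \<in> V \<Longrightarrow> reach E v r"
  shows "connected_graph (V, E)"
  unfolding connected_graph_def fst_conv snd_conv using assms by (meson reach_sym reach_trans)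

lemma reach_down_to_0:
  fixes E :: "nat set set"
  assumes "\<And>v. 0 < v \<Longrightarrow> v \<le> b \<Longrightarrow> \<exists>w<v. {w, v} \<in> E"
  shows "v \<le> b \<Longrightarrow> reach E v 0"
proof (induction v rule: less_induct)
  case (less v)
  show ?case
  proof (cases "v = 0")
    case False
    then obtain w where w: "w < v" "{w, v} \<in> E" using assms[of v] less.prems by auto
    have "reach E v w" using w(2) by (simp add: reach_edge insert_commute)
    moreover have "reach E w 0" using w(1) less by simp
    ultimately show ?thesis by (rule reach_trans)
  qed (simp add: reach_refl)
qed

lemma reach_up_to:
  fixes E :: "nat set set"
  assumes "\<And>v. a \<le> v \<Longrightarrow> v < t \<Longrightarrow> \<exists>w. v < w \<and> w \<le> t \<and> {v, w} \<in> E"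
  shows "a \<le> v \<Longrightarrow> v \<le> t \<Longrightarrow> reach E v t"
proof (induction "t - v" arbitrary: v rule: less_induct)
  case less
  show ?case
  proof (cases "v = t")
    case False
    then obtain w where w: "v < w" "w \<le> t" "{v, w} \<in> E" using assms[of v] less.prems by auto
    have "reach E w t" using w less by simp
    with w(3) show ?thesis by (blast intro: reach_trans reach_edge)
  qed (simp add: reach_refl)
qed

lemma connected_if_ordered:
  fixes E :: "nat set set"
  assumes "0 < n" and "{0, n - 1} \<in> E"
    and down: "\<And>v. 0 < v \<Longrightarrow> v < n - 1 \<Longrightarrow> \<exists>w<v. {w, v} \<in> E"
  shows "connected_graph ({..<n}, E)"
proof (rule connected_graphI[where r = 0])
  fix v assume "v \<in> {..<n}"
  show "reach E v 0"
  proof (cases "v = n - 1")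
    case True
    then show ?thesis using assms(2) by (simp add: reach_edge insert_commute)
  next
    case False
    show ?thesis
    proof (rule reach_down_to_0[where b = "n - 2"])
      show "v \<le> n - 2" using False \<open>v \<in> {..<n}\<close> by simp
    qed (use down in simp)
  qed
qed (use assms in auto)

lemma connected_delete_vertex_if_ordered:
  fixes E :: "nat set set"
  assumes "2 < n" and top: "{0, n - 1} \<in> E" and "x < n"
    and down: "\<And>v. 0 < v \<Longrightarrow> v < n - 1 \<Longrightarrow> \<exists>w<v. {w, v} \<in> E"
    and up: "\<And>v. 0 < v \<Longrightarrow> v < n - 1 \<Longrightarrow> \<exists>w. v < w \<and> w < n \<and> {v, w} \<in> E"
  shows "connected_graph (delete_vertex ({..<n}, E) x)"
proof -
  define E' where "E' = {e \<in> E. x \<notin> e}"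
  have "{0, 1} \<subseteq> {..<n}" using \<open>2 < n\<close> by auto
  then have "{..<n} - {x} \<noteq> {}" by auto
  have up': "reach E' v (n - 1)" if "x < v" "v < n" for v
  proof (rule reach_up_to[where a = "x + 1"])
    fix u assume "x + 1 \<le> u" "u < n - 1"
    then obtain w where "u < w" "w < n" "{u, w} \<in> E" using up[of u] by auto
    then show "\<exists>w. u < w \<and> w \<le> n - 1 \<and> {u, w} \<in> E'" using \<open>x + 1 \<le> u\<close> by (auto simp: E'_def)
  qed (use that in auto)
  have down': "reach E' v 0" if "v < x" for v
  proof (rule reach_down_to_0[where b = "x - 1"])
    fix u assume "0 < u" "u \<le> x - 1"
    moreover have "u < n - 1" using \<open>u \<le> x - 1\<close> \<open>0 < u\<close> \<open>x < n\<close> by linarith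
    ultimately obtain w where "w < u" "{w, u} \<in> E" using down[of u] by auto
    then show "\<exists>w<u. {w, u} \<in> E'" using \<open>u \<le> x - 1\<close> \<open>0 < u\<close> by (auto simp: E'_def)
  qed (use that in auto)
  have "connected_graph ({..<n} - {x}, E')"
  proof (rule connected_graphI[OF \<open>{..<n} - {x} \<noteq> {}\<close>, where r = "if x = 0 then n - 1 else 0"])
    fix v assume v: "v \<in> {..<n} - {x}"
    show "reach E' v (if x = 0 then n - 1 else 0)"
    proof (cases "v < x")
      case False
      with v have "x < v" "x < n - 1" by auto
      moreover have "x \<noteq> 0 \<Longrightarrow> {n - 1, 0} \<in> E'"
        using top \<open>x < n - 1\<close> by (auto simp: E'_def insert_commute)
      ultimately show ?thesis using v up'[of v] by (auto intro: reach_trans reach_edge)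
    qed (auto intro: down')
  qed
  then show ?thesis by (simp add: delete_vertex_def E'_def)
qed

lemma two_connected_if_ordered:
  fixes E :: "nat set set"
  assumes "2 < n" and "{0, n - 1} \<in> E"
    and "\<And>v. 0 < v \<Longrightarrow> v < n - 1 \<Longrightarrow> \<exists>w<v. {w, v} \<in> E"
    and "\<And>v. 0 < v \<Longrightarrow> v < n - 1 \<Longrightarrow> \<exists>w. v < w \<and> w < n \<and> {v, w} \<in> E"
  shows "two_connected ({..<n}, E)"
proof -
  have "connected_graph ({..<n}, E)"
    using assms by (intro connected_if_ordered) simp_all
  moreover have "connected_graph (delete_vertex ({..<n}, E) x)" if "x < n" for x
    using assms that by (intro connected_delete_vertex_if_ordered)
  ultimately show ?thesis using \<open>2 < n\<close> by (simp add: two_connected_def)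
qed

section \<open>Two-page book embeddings\<close>

definition plane_point :: "real \<Rightarrow> real \<Rightarrow> real^2" where
  "plane_point x y = (\<chi> i. if i = 1 then x else y)"

lemma plane_point_nth [simp]: "plane_point x y $ 1 = x" "plane_point x y $ 2 = y"
  by (simp_all add: plane_point_def)

lemma plane_point_eq_iff [simp]: "plane_point x y = plane_point x' y' \<longleftrightarrow> x = x' \<and> y = y'"
  by (metis plane_point_nth)

lemma continuous_on_plane_point [continuous_intros]:
  "continuous_on S f \<Longrightarrow> continuous_on S g \<Longrightarrow> continuous_on S (\<lambda>t. plane_point (f t) (g t))"
  unfolding plane_point_def
proof (intro continuous_on_vec_lambda)
  fix i :: 2
  show "continuous_on S f \<Longrightarrow> continuous_on S g \<Longrightarrow> continuous_on S (\<lambda>t. if i = 1 then f t else g t)"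
    by (cases "i = 1") simp_all
qed

definition arch_height :: "bool \<Rightarrow> real \<Rightarrow> real \<Rightarrow> real \<Rightarrow> real" where
  "arch_height up u v x = (if up then 1 else -1) * ((x - u) * (v - x))"

definition arch :: "bool \<Rightarrow> real \<Rightarrow> real \<Rightarrow> real \<Rightarrow> real^2" where
  "arch up u v t = plane_point (u + t * (v - u)) (arch_height up u v (u + t * (v - u)))"

lemma arc_arch: "u < v \<Longrightarrow> arc (arch up u v)"
  unfolding arc_def path_def arch_def arch_height_def
  by (intro conjI continuous_intros inj_onI) simp_all

lemma pathstart_arch [simp]: "pathstart (arch up u v) = plane_point u 0"
  and pathfinish_arch [simp]: "pathfinish (arch up u v) = plane_point v 0"
  by (simp_all add: pathstart_def pathfinish_def arch_def arch_height_def)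

lemma path_image_arch:
  assumes "z \<in> path_image (arch up u v)" and "u \<le> v"
  obtains x where "u \<le> x" "x \<le> v" "z = plane_point x (arch_height up u v x)"
proof -
  obtain t where t: "0 \<le> t" "t \<le> 1" "z = arch up u v t"
    using assms(1) by (auto simp: path_image_def)
  have "t * (v - u) \<le> v - u" using t assms(2) by (simp add: mult_left_le_one_le)
  then show thesis using t assms(2) that[of "u + t * (v - u)"] by (simp add: arch_def)
qed

lemma arch_height_eq_0_iff:
  "u \<le> x \<Longrightarrow> x \<le> v \<Longrightarrow> arch_height up u v x = 0 \<longleftrightarrow> x = u \<or> x = v"
  by (auto simp: arch_height_def)

lemma nested_product_less:
  fixes u v u' v' x :: real
  assumes "u \<le> u'" "v' \<le> v" "(u, v) \<noteq> (u', v')" "u' < x" "x < v'"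
  shows "(x - u') * (v' - x) < (x - u) * (v - x)"
proof (cases "u < u'")
  case True
  then show ?thesis using assms by (intro mult_less_le_imp_less) auto
next
  case False
  then show ?thesis using assms by (intro mult_le_less_imp_less) auto
qed

text \<open>Arches on the same side over nested intervals cannot meet off the axis: the outer one is
  strictly higher.\<close>

lemma arch_heights_eq_imp_cross:
  assumes "u \<le> x" "x \<le> v" "u' \<le> x" "x \<le> v'" "(u, v) \<noteq> (u', v')"
    and "arch_height up u v x = arch_height up' u' v' x" "arch_height up u v x \<noteq> 0"
  shows "up = up' \<and> (u < u' \<and> u' < v \<and> v < v' \<or> u' < u \<and> u < v' \<and> v' < v)"
proof -
  define h h' where "h = (x - u) * (v - x)" and "h' = (x - u') * (v' - x)"
  have "0 \<le> h" "0 \<le> h'"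
    using assms(1-4) by (simp_all add: h_def h'_def)
  moreover have "(if up then 1 else -1) * h = (if up' then 1 else -1) * h'"
    using assms(6) by (simp add: arch_height_def h_def h'_def)
  moreover have "h \<noteq> 0"
    using assms(7) by (simp add: arch_height_def h_def)
  ultimately have "up = up'" "h = h'" "0 < h"
    by (auto split: if_splits)
  then have "0 < (x - u) * (v - x)" "0 < (x - u') * (v' - x)"
    by (simp_all add: h_def h'_def)
  then have inner: "u < x" "x < v" "u' < x" "x < v'"
    using assms(1-4) by (auto simp: zero_less_mult_iff)
  moreover have "\<not> (u \<le> u' \<and> v' \<le> v)"
    using nested_product_less[of u u' v' v x] assms(5) inner \<open>h = h'\<close> by (auto simp: h_def h'_def)
  moreover have "\<not> (u' \<le> u \<and> v \<le> v')"
    using nested_product_less[of u' u v v' x] assms(5) inner \<open>h = h'\<close> by (auto simp: h_def h'_def)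
  ultimately show ?thesis using \<open>up = up'\<close> by auto
qed

lemma arch_meets_axis:
  assumes "z \<in> path_image (arch up u v)" "u \<le> v" "z $ 2 = 0"
  shows "z = plane_point u 0 \<or> z = plane_point v 0"
  using assms by (elim path_image_arch) (auto simp: arch_height_eq_0_iff)

lemma arches_meet_off_axis:
  assumes "z \<in> path_image (arch up u v)" "z \<in> path_image (arch up' u' v')" "u \<le> v" "u' \<le> v'"
    and "(u, v) \<noteq> (u', v')" "z $ 2 \<noteq> 0"
  shows "up = up' \<and> (u < u' \<and> u' < v \<and> v < v' \<or> u' < u \<and> u < v' \<and> v' < v)"
proof -
  obtain x where x: "u \<le> x" "x \<le> v" "z = plane_point x (arch_height up u v x)"
    using assms(1,3) by (rule path_image_arch)
  obtain x' where x': "u' \<le> x'" "x' \<le> v'" "z = plane_point x' (arch_height up' u' v' x')"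
    using assms(2,4) by (rule path_image_arch)
  show ?thesis
    using arch_heights_eq_imp_cross[of u x v u' v' up up'] x x' assms(5,6) by auto
qed

lemma planar_if_two_page_book_embedding:
  fixes E :: "nat set set" and page :: "nat set \<Rightarrow> bool"
  assumes edges: "\<And>e. e \<in> E \<Longrightarrow> \<exists>u v. u < v \<and> e = {u, v}"
    and no_crossing: "\<And>a b c d. {a, b} \<in> E \<Longrightarrow> {c, d} \<in> E \<Longrightarrow> a < c \<Longrightarrow> c < b \<Longrightarrow> b < d \<Longrightarrow>
      page {a, b} \<noteq> page {c, d}"
  shows "planar (V, E)"
proof -
  define p where "p v = plane_point (real v) 0" for v :: nat
  define \<gamma> where "\<gamma> e = arch (page e) (real (Min e)) (real (Max e))" for e :: "nat set"
  have ends: "Min e < Max e" "e = {Min e, Max e}" if "e \<in> E" for e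
    using edges[OF that] by auto
  have on_axis: "z \<in> p ` e" if e: "e \<in> E" and z: "z \<in> path_image (\<gamma> e)" "z $ 2 = 0" for e z
  proof -
    have "real (Min e) \<le> real (Max e)" using ends(1)[OF e] by simp
    then have "z = p (Min e) \<or> z = p (Max e)"
      using arch_meets_axis[of z "page e"] z unfolding \<gamma>_def p_def by blast
    then show ?thesis using ends(2)[OF e] by (metis image_insert insertI1 insert_commute)
  qed
  have off_axis: False
    if e: "e \<in> E" "e' \<in> E" "e \<noteq> e'"
      and z: "z \<in> path_image (\<gamma> e)" "z \<in> path_image (\<gamma> e')" "z $ 2 \<noteq> 0"
    for e e' z
  proof -
    have "(real (Min e), real (Max e)) \<noteq> (real (Min e'), real (Max e'))"
      using e ends by (metis of_nat_eq_iff prod.inject)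
    moreover have "real (Min e) \<le> real (Max e)" "real (Min e') \<le> real (Max e')"
      using ends(1) e by (simp_all add: less_imp_le)
    ultimately have "page e = page e' \<and> (Min e < Min e' \<and> Min e' < Max e \<and> Max e < Max e' \<or>
        Min e' < Min e \<and> Min e < Max e' \<and> Max e' < Max e)"
      using arches_meet_off_axis[OF z(1,2)[unfolded \<gamma>_def]] z(3) by simp
    then show False using no_crossing e ends by metis
  qed
  have "arc (\<gamma> e)" "{pathstart (\<gamma> e), pathfinish (\<gamma> e)} = p ` e"
    and "path_image (\<gamma> e) \<inter> p ` V \<subseteq> p ` e" if "e \<in> E" for e
    using ends[OF that] on_axis[OF that] by (auto simp: \<gamma>_def p_def arc_arch)
  moreover have "path_image (\<gamma> e) \<inter> path_image (\<gamma> e') \<subseteq> p ` (e \<inter> e')"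
    if "e \<in> E" "e' \<in> E" "e \<noteq> e'" for e e'
  proof
    fix z assume z: "z \<in> path_image (\<gamma> e) \<inter> path_image (\<gamma> e')"
    then have "z \<in> p ` e" "z \<in> p ` e'"
      using on_axis off_axis that by blast+
    then show "z \<in> p ` (e \<inter> e')" by (auto simp: p_def)
  qed
  moreover have "inj_on p V" by (auto simp: inj_on_def p_def)
  ultimately show ?thesis unfolding planar_def by (intro exI[of _ p] exI[of _ \<gamma>]) auto
qed

section \<open>An obstruction to \<open>\<Lambda>\<close>-factors\<close>

definition partition_into_triples :: "'a set \<Rightarrow> ('a \<Rightarrow> 'a set) \<Rightarrow> bool" where
  "partition_into_triples V T \<longleftrightarrow>
     (\<forall>v\<in>V. v \<in> T v \<and> T v \<subseteq> V \<and> card (T v) = 3 \<and> (\<forall>w\<in>T v. T w = T v))"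

lemma Lambda_factor_triples:
  assumes "has_Lambda_factor (V, E)"
  obtains T where "partition_into_triples V T"
    and "\<And>v. v \<in> V \<Longrightarrow> \<exists>a b c. T v = {a, b, c} \<and> {a, b} \<in> E \<and> {b, c} \<in> E"
proof -
  obtain F where "F \<subseteq> E" and F: "\<And>v. v \<in> V \<Longrightarrow> \<exists>a b c.
      a \<noteq> b \<and> b \<noteq> c \<and> a \<noteq> c \<and> v \<in> {a, b, c} \<and>
      {w\<in>V. reach F v w} = {a, b, c} \<and> {e\<in>F. e \<subseteq> {a, b, c}} = {{a, b}, {b, c}}"
    using assms unfolding has_Lambda_factor_def by auto
  define T where "T v = {w\<in>V. reach F v w}" for v
  have "T w = T v" if "w \<in> T v" for v w
  proof -
    from that have vw: "reach F v w" by (simp add: T_def)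
    show ?thesis
      unfolding T_def using reach_trans[OF vw] reach_trans[OF reach_sym[OF vw]] by blast
  qed
  moreover have "v \<in> T v \<and> T v \<subseteq> V \<and> card (T v) = 3 \<and>
      (\<exists>a b c. T v = {a, b, c} \<and> {a, b} \<in> E \<and> {b, c} \<in> E)"
    if v: "v \<in> V" for v
  proof -
    obtain a b c where abc: "a \<noteq> b" "b \<noteq> c" "a \<noteq> c" "v \<in> {a, b, c}" "T v = {a, b, c}"
      and "{e\<in>F. e \<subseteq> {a, b, c}} = {{a, b}, {b, c}}"
      using F[OF v] unfolding T_def by blast
    then have "{a, b} \<in> E" "{b, c} \<in> E" using \<open>F \<subseteq> E\<close> by blast+
    moreover have "T v \<subseteq> V" by (simp add: T_def)
    ultimately show ?thesis using abc by auto
  qed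
  ultimately show thesis using that[of T] unfolding partition_into_triples_def by blast
qed

lemma three_dvd_card_if_partition_into_triples:
  assumes "finite R" and "partition_into_triples R T"
  shows "3 dvd card R"
proof -
  have T: "v \<in> T v" "T v \<subseteq> R" "card (T v) = 3" "\<And>w. w \<in> T v \<Longrightarrow> T w = T v" if "v \<in> R" for v
    using assms(2) that unfolding partition_into_triples_def by blast+
  have "R = \<Union> (T ` R)" using T(1,2) by blast
  moreover have "pairwise disjnt (T ` R)"
    unfolding pairwise_def disjnt_def using T by (metis disjoint_iff imageE)
  moreover have "finite X" if "X \<in> T ` R" for X
    using that assms(1) T(2) by (auto intro: finite_subset)
  ultimately have "card R = sum card (T ` R)"
    by (metis card_Union_disjoint)
  also have "\<dots> = (\<Sum>X\<in>T ` R. 3)"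
    using T(3) by (intro sum.cong) auto
  finally show ?thesis by simp
qed

lemma card_touching_le:
  assumes "finite V" "S \<subseteq> V" "partition_into_triples V T"
  shows "card {v \<in> V - S. T v \<inter> S \<noteq> {}} \<le> 2 * card S"
proof -
  have T: "v \<in> T v" "T v \<subseteq> V" "card (T v) = 3" "\<And>w. w \<in> T v \<Longrightarrow> T w = T v" if "v \<in> V" for v
    using assms(3) that unfolding partition_into_triples_def by blast+
  have "finite S" "\<And>v. v \<in> V \<Longrightarrow> finite (T v)"
    using assms(1,2) T(2) by (auto intro: finite_subset)
  have "{v \<in> V - S. T v \<inter> S \<noteq> {}} \<subseteq> (\<Union>s\<in>S. T s - {s})"
  proof
    fix v assume "v \<in> {v \<in> V - S. T v \<inter> S \<noteq> {}}"
    then obtain s where "s \<in> S" "s \<in> T v" "v \<in> V" "v \<notin> S" by blast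
    then have "v \<in> T s - {s}" using T(1)[of v] T(4)[of v s] by auto
    with \<open>s \<in> S\<close> show "v \<in> (\<Union>s\<in>S. T s - {s})" by blast
  qed
  then have "card {v \<in> V - S. T v \<inter> S \<noteq> {}} \<le> card (\<Union>s\<in>S. T s - {s})"
    using \<open>finite S\<close> \<open>\<And>v. v \<in> V \<Longrightarrow> finite (T v)\<close> assms(2) by (intro card_mono) auto
  also have "\<dots> \<le> (\<Sum>s\<in>S. card (T s - {s}))"
    using \<open>finite S\<close> by (rule card_UN_le)
  also have "\<dots> = (\<Sum>s\<in>S. 2)"
    using T(1,3) \<open>\<And>v. v \<in> V \<Longrightarrow> finite (T v)\<close> assms(2) by (intro sum.cong) auto
  finally show ?thesis by simp
qed

lemma card_mod_3_le_touching:
  assumes "finite V" "partition_into_triples V T" "P \<subseteq> V"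
    and closed: "\<And>v. v \<in> P \<Longrightarrow> T v \<inter> S = {} \<Longrightarrow> T v \<subseteq> P"
  shows "card P mod 3 \<le> card {v \<in> P. T v \<inter> S \<noteq> {}}"
proof -
  define R where "R = {v \<in> P. T v \<inter> S = {}}"
  have "finite P" using assms(1,3) by (rule finite_subset[rotated])
  have "partition_into_triples R T"
    unfolding partition_into_triples_def
  proof
    fix v assume "v \<in> R"
    then have v: "v \<in> V" "T v \<subseteq> P" "T v \<inter> S = {}" using assms(3) closed by (auto simp: R_def)
    then have T: "v \<in> T v" "card (T v) = 3" "\<forall>w\<in>T v. T w = T v"
      using assms(2) unfolding partition_into_triples_def by blast+
    have "w \<in> R" if "w \<in> T v" for w
      using v(2,3) T(3) that unfolding R_def by force
    with T show "v \<in> T v \<and> T v \<subseteq> R \<and> card (T v) = 3 \<and> (\<forall>w\<in>T v. T w = T v)" by blast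
  qed
  then have "3 dvd card R"
    using \<open>finite P\<close> by (intro three_dvd_card_if_partition_into_triples) (simp_all add: R_def)
  moreover have "card P = card {v \<in> P. T v \<inter> S \<noteq> {}} + card R"
  proof -
    have "P = {v \<in> P. T v \<inter> S \<noteq> {}} \<union> R" "{v \<in> P. T v \<inter> S \<noteq> {}} \<inter> R = {}"
      by (auto simp: R_def)
    then show ?thesis using \<open>finite P\<close> by (metis card_Un_disjoint finite_Un)
  qed
  ultimately have "card P mod 3 = card {v \<in> P. T v \<inter> S \<noteq> {}} mod 3"
    by (simp add: mod_add_right_eq[symmetric])
  then show ?thesis by simp
qed

lemma path3_stays_in_piece:
  assumes "{a, b} \<in> E" "{b, c} \<in> E" "v \<in> {a, b, c}" "v \<in> P" "{a, b, c} \<inter> S = {}"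
    and closed: "\<And>x y. {x, y} \<in> E \<Longrightarrow> x \<in> P \<Longrightarrow> y \<in> P \<union> S"
  shows "{a, b, c} \<subseteq> P"
proof -
  have "b \<in> P"
    using assms(3-5) closed[OF assms(1)] closed[of c b] assms(2) by (auto simp: insert_commute)
  then show ?thesis
    using assms(5) closed[of b a] closed[OF assms(2)] assms(1) by (auto simp: insert_commute)
qed

text \<open>A path of a \<open>\<Lambda>\<close>-factor meeting a piece \<open>P i\<close> either stays inside it or passes through
  \<open>S\<close>; a vertex of \<open>S\<close> lies on one path, which covers at most two vertices outside \<open>S\<close>, while
  at least \<open>card (P i) mod 3\<close> vertices of the piece lie on such paths.\<close>

theorem no_Lambda_factor_if_deficient:
  assumes "finite V" "S \<subseteq> V" "finite I"
    and pieces: "\<And>i. i \<in> I \<Longrightarrow> P i \<subseteq> V - S"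
    and disjoint: "\<And>i j. i \<in> I \<Longrightarrow> j \<in> I \<Longrightarrow> i \<noteq> j \<Longrightarrow> P i \<inter> P j = {}"
    and closed: "\<And>i a b. i \<in> I \<Longrightarrow> {a, b} \<in> E \<Longrightarrow> a \<in> P i \<Longrightarrow> b \<in> P i \<union> S"
    and deficient: "2 * card S < (\<Sum>i\<in>I. card (P i) mod 3)"
  shows "\<not> has_Lambda_factor (V, E)"
proof
  assume "has_Lambda_factor (V, E)"
  then obtain T where T: "partition_into_triples V T"
    and T_path: "\<And>v. v \<in> V \<Longrightarrow> \<exists>a b c. T v = {a, b, c} \<and> {a, b} \<in> E \<and> {b, c} \<in> E"
    by (rule Lambda_factor_triples) (rule that)
  let ?M = "{v \<in> V - S. T v \<inter> S \<noteq> {}}"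
  have "T v \<subseteq> P i" if "i \<in> I" "v \<in> P i" "T v \<inter> S = {}" for i v
  proof -
    have "v \<in> V" "v \<in> T v" using pieces that T unfolding partition_into_triples_def by blast+
    then obtain a b c where "T v = {a, b, c}" "{a, b} \<in> E" "{b, c} \<in> E" using T_path by blast
    then show ?thesis using path3_stays_in_piece[of a b E c v "P i" S] closed that \<open>v \<in> T v\<close> by simp
  qed
  then have "card (P i) mod 3 \<le> card {v \<in> P i. T v \<inter> S \<noteq> {}}" if "i \<in> I" for i
    using pieces[OF that] that by (intro card_mod_3_le_touching[OF \<open>finite V\<close> T]) auto
  moreover have "{v \<in> P i. T v \<inter> S \<noteq> {}} = ?M \<inter> P i" if "i \<in> I" for i
    using pieces[OF that] by auto
  ultimately have "card (P i) mod 3 \<le> card (?M \<inter> P i)" if "i \<in> I" for i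
    using that by simp
  then have "(\<Sum>i\<in>I. card (P i) mod 3) \<le> (\<Sum>i\<in>I. card (?M \<inter> P i))"
    by (rule sum_mono)
  also have "\<dots> = card (\<Union>i\<in>I. ?M \<inter> P i)"
    using \<open>finite I\<close> \<open>finite V\<close> disjoint by (intro card_UN_disjoint[symmetric]) auto
  also have "\<dots> \<le> card ?M"
    using \<open>finite V\<close> by (intro card_mono) auto
  also have "\<dots> \<le> 2 * card S"
    using \<open>finite V\<close> \<open>S \<subseteq> V\<close> T by (rule card_touching_le)
  finally show False using deficient by linarith
qed

section \<open>Periodic graphs\<close>

definition shift :: "nat \<Rightarrow> nat \<Rightarrow> int \<Rightarrow> nat" where
  "shift n v d = nat ((int v + d) mod int n)"

lemma int_shift: "0 < n \<Longrightarrow> int (shift n v d) = (int v + d) mod int n"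
  by (simp add: shift_def)

lemma shift_less: "0 < n \<Longrightarrow> shift n v d < n"
  by (simp add: shift_def nat_less_iff)

lemma shift_0 [simp]: "v < n \<Longrightarrow> shift n v 0 = v"
  by (simp add: shift_def)

lemma shift_eq_add: "0 \<le> int v + d \<Longrightarrow> int v + d < int n \<Longrightarrow> int (shift n v d) = int v + d"
  by (simp add: shift_def)

lemma shift_0_minus_1: "0 < n \<Longrightarrow> shift n 0 (-1) = n - 1"
  by (simp add: shift_def zmod_minus1 nat_diff_distrib)

lemma shift_last_1: "0 < n \<Longrightarrow> shift n (n - 1) 1 = 0"
  by (simp add: shift_def of_nat_diff)

lemma mod_add_within: "a mod p + t < p \<Longrightarrow> (a + t) mod p = a mod p + (t :: nat)"
  by (metis mod_add_left_eq mod_less)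

lemma block_index_less:
  fixes q k r p :: nat
  assumes "q < k" "r < p"
  shows "p * q + r < p * k"
proof -
  have "p * Suc q \<le> p * k" using assms(1) by (intro mult_le_mono2) simp
  then show ?thesis using assms(2) by simp
qed

lemma block_index_eq_iff:
  fixes q q' r r' p :: nat
  assumes "r < p" "r' < p"
  shows "p * q + r = p * q' + r' \<longleftrightarrow> q = q' \<and> r = r'"
proof
  assume eq: "p * q + r = p * q' + r'"
  have "(p * q + r) div p = q" "(p * q + r) mod p = r"
    "(p * q' + r') div p = q'" "(p * q' + r') mod p = r'" using assms by simp_all
  then show "q = q' \<and> r = r'" using eq by metis
qed simp

lemma shift_mod:
  assumes "0 < p" "0 < k"
  shows "shift (p * k) v d mod p = shift p (v mod p) d"
proof -
  have "int (shift (p * k) v d mod p) = (int v + d) mod int (p * k) mod int p"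
    using assms by (simp add: int_shift zmod_int)
  also have "\<dots> = (int (v mod p) + d) mod int p"
    by (simp add: mod_mod_cancel zmod_int mod_add_left_eq)
  also have "\<dots> = int (shift p (v mod p) d)"
    using assms by (simp add: int_shift)
  finally show ?thesis by simp
qed

lemma shift_shift_uminus: "v < n \<Longrightarrow> shift n (shift n v d) (- d) = v"
proof -
  assume "v < n"
  then have "int (shift n (shift n v d) (- d)) = ((int v + d) mod int n - d) mod int n"
    by (simp add: int_shift)
  also have "\<dots> = int v"
    using \<open>v < n\<close> by (simp add: mod_diff_left_eq)
  finally show ?thesis by simp
qed

lemma shift_inj:
  assumes "0 < n" "2 * \<bar>d\<bar> < int n" "2 * \<bar>d'\<bar> < int n" "shift n v d = shift n v d'"
  shows "d = d'"
proof -
  have "(int v + d) mod int n = (int v + d') mod int n"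
    using assms(1) arg_cong[OF assms(4), of int] by (simp add: int_shift)
  then have "int n dvd d - d'"
    by (simp add: mod_eq_dvd_iff)
  moreover have "\<bar>d - d'\<bar> < int n" using assms(2,3) by linarith
  ultimately show "d = d'"
    using dvd_imp_le_int[of "d - d'" "int n"] by fastforce
qed

text \<open>The vertices \<open>0, \<dots>, p * k - 1\<close> form \<open>k\<close> consecutive blocks of length \<open>p\<close>, and a vertex
  \<open>v\<close> is joined to \<open>v + d\<close> (modulo \<open>p * k\<close>) for each offset \<open>d\<close> prescribed for its
  position \<open>v mod p\<close> in the block.\<close>

definition periodic_graph :: "nat \<Rightarrow> (nat \<Rightarrow> int set) \<Rightarrow> nat \<Rightarrow> nat graph" where
  "periodic_graph p D k =
     ({..<p * k}, {{v, shift (p * k) v d} | v d. v < p * k \<and> d \<in> D (v mod p)})"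

lemma periodic_graph_edgeE:
  assumes "e \<in> snd (periodic_graph p D k)"
  obtains v d where "e = {v, shift (p * k) v d}" "v < p * k" "d \<in> D (v mod p)"
  using assms unfolding periodic_graph_def by auto

lemma card_vertices_periodic_graph [simp]: "card (fst (periodic_graph p D k)) = p * k"
  by (simp add: periodic_graph_def)

lemma less_mult_imp_pos:
  fixes v p k :: nat
  assumes "v < p * k"
  shows "0 < p \<and> 0 < k"
proof -
  have "0 < p * k" by (rule le_less_trans[OF le0 assms])
  then show ?thesis by (simp add: nat_0_less_mult_iff)
qed

lemma periodic_graph_eq: "periodic_graph p D k = ({..<p * k}, snd (periodic_graph p D k))"
  by (simp add: periodic_graph_def)

lemma periodic_graph_edgeI:
  "v < p * k \<Longrightarrow> d \<in> D (v mod p) \<Longrightarrow> {v, shift (p * k) v d} \<in> snd (periodic_graph p D k)"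
  by (auto simp: periodic_graph_def)

lemma periodic_graph_edge_vertices:
  assumes "{a, b} \<in> snd (periodic_graph p D k)"
  shows "a < p * k" "b < p * k"
proof -
  obtain v d where "{a, b} = {v, shift (p * k) v d}" "v < p * k"
    using assms by (rule periodic_graph_edgeE)
  moreover have "shift (p * k) v d < p * k" using \<open>v < p * k\<close> by (intro shift_less) linarith
  ultimately show "a < p * k" "b < p * k" by (auto simp: doubleton_eq_iff)
qed

lemma shift_within_block:
  assumes "v < p * k" "0 \<le> int (v mod p) + d" "int (v mod p) + d < int p"
  shows "int (shift (p * k) v d) = int v + d"
proof (rule shift_eq_add)
  have "v div p < k" using assms(1) by (simp add: less_mult_imp_div_less mult.commute)
  then have "v div p * p + p \<le> p * k"
    by (metis add.commute mult.commute mult_Suc_right mult_le_mono2 Suc_leI)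
  then have "int (v div p * p) + int p \<le> int (p * k)"
    by (simp only: of_nat_add[symmetric] of_nat_le_iff)
  moreover have "int v = int (v div p * p) + int (v mod p)"
    by (simp only: of_nat_add[symmetric] div_mult_mod_eq)
  ultimately show "0 \<le> int v + d" "int v + d < int (p * k)" using assms(2,3) by linarith+
qed

lemma card_residues_le:
  assumes "finite H"
  shows "card {v \<in> {..<p * k}. v mod p \<in> H} \<le> k * card H"
proof -
  have "{v \<in> {..<p * k}. v mod p \<in> H} \<subseteq> (\<lambda>(q, r). p * q + r) ` ({..<k} \<times> H)"
  proof
    fix v assume "v \<in> {v \<in> {..<p * k}. v mod p \<in> H}"
    then have "v div p < k" "v mod p \<in> H" "v = p * (v div p) + v mod p"
      by (simp_all add: less_mult_imp_div_less mult.commute)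
    then show "v \<in> (\<lambda>(q, r). p * q + r) ` ({..<k} \<times> H)" by force
  qed
  then have "card {v \<in> {..<p * k}. v mod p \<in> H} \<le> card ({..<k} \<times> H)"
    using assms
    by (meson card_image_le card_mono finite_SigmaI finite_imageI finite_lessThan order_trans)
  then show ?thesis by (simp add: card_cartesian_product)
qed

lemma sum_card_translates_mod_3:
  "(\<Sum>i\<in>{..<k} \<times> J. card ((\<lambda>(q, j). (\<lambda>r. p * q + r) ` B j) i) mod 3) = k * (\<Sum>j\<in>J. card (B j) mod 3)"
proof -
  have "(\<Sum>i\<in>{..<k} \<times> J. card ((\<lambda>(q, j). (\<lambda>r. p * q + r) ` B j) i) mod 3) =
      (\<Sum>q<k. \<Sum>j\<in>J. card ((\<lambda>r. p * q + r) ` B j) mod 3)"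
    unfolding sum.cartesian_product by (intro sum.cong) auto
  also have "\<dots> = (\<Sum>q<k. \<Sum>j\<in>J. card (B j) mod 3)"
    by (simp add: card_image)
  finally show ?thesis by simp
qed

text \<open>By \<open>offset_local\<close>, the only edges leaving a block are those of length 1 from its last
  vertex to the first vertex of the next block.\<close>

locale periodic_pattern =
  fixes p :: nat and D :: "nat \<Rightarrow> int set"
  assumes offset_uminus: "\<And>r d. r < p \<Longrightarrow> d \<in> D r \<Longrightarrow> - d \<in> D (shift p r d)"
    and offset_short: "\<And>r d. r < p \<Longrightarrow> d \<in> D r \<Longrightarrow> d \<noteq> 0 \<and> 2 * \<bar>d\<bar> < int p"
    and offset_local: "\<And>r d. r < p \<Longrightarrow> d \<in> D r \<Longrightarrow>
      0 \<le> int r + d \<and> int r + d < int p \<or> r = 0 \<and> d = -1 \<or> r = p - 1 \<and> d = 1"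
begin

lemma edge_iff:
  assumes "v < p * k"
  shows "{v, w} \<in> snd (periodic_graph p D k) \<longleftrightarrow> w \<in> shift (p * k) v ` D (v mod p)"
proof
  assume "{v, w} \<in> snd (periodic_graph p D k)"
  then obtain u d where e: "{v, w} = {u, shift (p * k) u d}" "u < p * k" "d \<in> D (u mod p)"
    by (rule periodic_graph_edgeE)
  have "0 < p" "0 < k" using less_mult_imp_pos[OF assms] by simp_all
  show "w \<in> shift (p * k) v ` D (v mod p)"
  proof (cases "v = u")
    case False
    with e(1) have "v = shift (p * k) u d" "w = u" by (auto simp: doubleton_eq_iff)
    moreover have "- d \<in> D (v mod p)"
      using offset_uminus[OF _ e(3)] \<open>0 < p\<close> \<open>0 < k\<close> \<open>v = shift (p * k) u d\<close>
      by (simp add: shift_mod)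
    ultimately show ?thesis using shift_shift_uminus[OF e(2)] by (metis image_eqI)
  qed (use e in \<open>auto simp: doubleton_eq_iff\<close>)
next
  assume "w \<in> shift (p * k) v ` D (v mod p)"
  then show "{v, w} \<in> snd (periodic_graph p D k)"
    using assms unfolding periodic_graph_def by auto
qed

lemma offset_short_mult:
  assumes "v < p * k" "d \<in> D (v mod p)"
  shows "d \<noteq> 0 \<and> 2 * \<bar>d\<bar> < int (p * k)"
proof -
  have "0 < p" "0 < k" using less_mult_imp_pos[OF assms(1)] by simp_all
  then have "d \<noteq> 0 \<and> 2 * \<bar>d\<bar> < int p" "int p \<le> int p * int k"
    using offset_short[of "v mod p" d] assms(2) by simp_all
  then show ?thesis unfolding of_nat_mult by linarith
qed

lemma shift_inj_on:
  assumes "v < p * k"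
  shows "inj_on (shift (p * k) v) (D (v mod p))"
proof (rule inj_onI)
  fix d d' assume "d \<in> D (v mod p)" "d' \<in> D (v mod p)" "shift (p * k) v d = shift (p * k) v d'"
  moreover have "0 < p * k" by (rule le_less_trans[OF le0 assms])
  ultimately show "d = d'"
    using shift_inj[of "p * k" d d' v] offset_short_mult[OF assms] by blast
qed

lemma shift_neq_self:
  assumes "v < p * k" "d \<in> D (v mod p)"
  shows "shift (p * k) v d \<noteq> v"
proof
  assume "shift (p * k) v d = v"
  then have "shift (p * k) v d = shift (p * k) v 0" using assms(1) by simp
  moreover have "0 < p * k" by (rule le_less_trans[OF le0 assms(1)])
  moreover have "2 * \<bar>0 :: int\<bar> < int (p * k)" using \<open>0 < p * k\<close> by simp
  ultimately have "d = 0"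
    using offset_short_mult[OF assms] shift_inj[of "p * k" d 0 v] by blast
  then show False using offset_short_mult[OF assms] by simp
qed

lemma simple: "simple_graph (periodic_graph p D k)"
  unfolding simple_graph_def
proof (intro conjI ballI)
  fix e assume "e \<in> snd (periodic_graph p D k)"
  then obtain v d where "e = {v, shift (p * k) v d}" "v < p * k" "d \<in> D (v mod p)"
    by (rule periodic_graph_edgeE)
  then show "\<exists>u w. u \<noteq> w \<and> u \<in> fst (periodic_graph p D k) \<and> w \<in> fst (periodic_graph p D k) \<and>
      e = {u, w}"
    using shift_neq_self shift_less[of "p * k" v d] less_mult_imp_pos[of v p k]
    by (intro exI[of _ v] exI[of _ "shift (p * k) v d"]) (auto simp: periodic_graph_def)
qed (simp add: periodic_graph_def)

lemma degree_eq:
  assumes "v < p * k"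
  shows "degree (periodic_graph p D k) v = card (D (v mod p))"
proof -
  have "{e \<in> snd (periodic_graph p D k). v \<in> e} = (\<lambda>w. {v, w}) ` shift (p * k) v ` D (v mod p)"
  proof (intro equalityI subsetI)
    fix e assume "e \<in> {e \<in> snd (periodic_graph p D k). v \<in> e}"
    moreover from this obtain u d where "e = {u, shift (p * k) u d}"
      by (auto elim: periodic_graph_edgeE)
    ultimately obtain w where "e = {v, w}" "{v, w} \<in> snd (periodic_graph p D k)"
      by (auto simp: insert_commute)
    then show "e \<in> (\<lambda>w. {v, w}) ` shift (p * k) v ` D (v mod p)"
      using edge_iff[OF assms] by blast
  qed (use edge_iff[OF assms] in blast)
  moreover have "inj_on (\<lambda>w. {v, w}) X" for X :: "nat set"
    by (auto simp: inj_on_def doubleton_eq_iff)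
  ultimately show ?thesis
    unfolding degree_def by (simp add: card_image shift_inj_on[OF assms])
qed

lemma cubic:
  assumes "\<And>r. r < p \<Longrightarrow> card (D r) = 3"
  shows "cubic (periodic_graph p D k)"
  unfolding cubic_def
proof
  fix v assume "v \<in> fst (periodic_graph p D k)"
  then have "v < p * k" by (simp add: periodic_graph_def)
  then show "degree (periodic_graph p D k) v = 3"
    using assms[of "v mod p"] degree_eq[OF \<open>v < p * k\<close>] less_mult_imp_pos[OF \<open>v < p * k\<close>] by simp
qed

lemma bipartite:
  assumes "even p" and odd: "\<And>r d. r < p \<Longrightarrow> d \<in> D r \<Longrightarrow> odd d"
  shows "bipartite (periodic_graph p D k)"
  unfolding bipartite_def
proof (intro exI[of _ "{v \<in> fst (periodic_graph p D k). even v}"] conjI ballI)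
  fix e assume "e \<in> snd (periodic_graph p D k)"
  then obtain v d where e: "e = {v, shift (p * k) v d}" "v < p * k" "d \<in> D (v mod p)"
    by (rule periodic_graph_edgeE)
  have "0 < p * k" by (rule le_less_trans[OF le0 e(2)])
  have "even (int (shift (p * k) v d)) \<longleftrightarrow> even (int v + d)"
    using \<open>even p\<close> \<open>0 < p * k\<close> by (simp add: int_shift dvd_mod_iff)
  then have "even v \<longleftrightarrow> odd (shift (p * k) v d)"
    using odd[of "v mod p" d] e(3) less_mult_imp_pos[OF e(2)] by simp
  moreover have "shift (p * k) v d < p * k" using \<open>0 < p * k\<close> by (rule shift_less)
  ultimately show "card (e \<inter> {v \<in> fst (periodic_graph p D k). even v}) = 1"
    using e(1,2) by (cases "even v") (auto simp: periodic_graph_def Int_insert_left)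
qed (auto simp: periodic_graph_def)

lemma shift_inner_vertex:
  assumes "0 < v" "v < p * k - 1" "d \<in> D (v mod p)"
  shows "int (shift (p * k) v d) = int v + d"
proof -
  have "v < p * k" "int v + 1 < int (p * k)" using assms(2) by linarith+
  have "v mod p < p" using less_mult_imp_pos[OF \<open>v < p * k\<close>] by simp
  then show ?thesis
    using offset_local[OF _ assms(3)] assms(1) \<open>int v + 1 < int (p * k)\<close> \<open>v < p * k\<close>
      shift_within_block[of v p k d] shift_eq_add[of v d "p * k"]
    by auto
qed

lemma two_connected:
  assumes "2 < p * k" "-1 \<in> D 0"
    and neg: "\<And>r. r < p \<Longrightarrow> \<exists>d\<in>D r. d < 0" and pos: "\<And>r. r < p \<Longrightarrow> \<exists>d\<in>D r. 0 < d"
  shows "two_connected (periodic_graph p D k)"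
proof (subst periodic_graph_eq, rule two_connected_if_ordered[OF assms(1)])
  let ?E = "snd (periodic_graph p D k)"
  have "0 < p * k" using assms(1) by linarith
  then show "{0, p * k - 1} \<in> ?E"
    using assms(2) edge_iff[of 0 k "p * k - 1"] shift_0_minus_1[of "p * k"] by force
  fix v assume v: "0 < v" "v < p * k - 1"
  then have "v < p * k" by linarith
  have "v mod p < p" using less_mult_imp_pos[OF \<open>v < p * k\<close>] by simp
  obtain d where d: "d \<in> D (v mod p)" "d < 0" using neg[OF \<open>v mod p < p\<close>] by blast
  then have "shift (p * k) v d < v" using shift_inner_vertex[OF v d(1)] by linarith
  moreover have "{shift (p * k) v d, v} \<in> ?E"
    using periodic_graph_edgeI[of v p k d D, OF \<open>v < p * k\<close> d(1)] by (simp add: insert_commute)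
  ultimately show "\<exists>w<v. {w, v} \<in> ?E" by auto
  obtain d' where d': "d' \<in> D (v mod p)" "0 < d'" using pos[OF \<open>v mod p < p\<close>] by blast
  then have "v < shift (p * k) v d'" using shift_inner_vertex[OF v d'(1)] by linarith
  moreover have "shift (p * k) v d' < p * k" using \<open>0 < p * k\<close> by (rule shift_less)
  ultimately show "\<exists>w. v < w \<and> w < p * k \<and> {v, w} \<in> ?E"
    using periodic_graph_edgeI[of v p k d' D, OF \<open>v < p * k\<close> d'(1)] by blast
qed

lemma edge_cases:
  assumes "{a, b} \<in> snd (periodic_graph p D k)" "a < b"
  shows "b = a + 1 \<or> a = 0 \<and> b = p * k - 1 \<or> int (b - a) \<in> D (a mod p) \<and> a mod p + (b - a) < p"
proof -
  have "a < p * k" "b < p * k" using periodic_graph_edge_vertices[OF assms(1)] by simp_all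
  then obtain d where d: "d \<in> D (a mod p)" "b = shift (p * k) a d"
    using edge_iff[of a k b] assms(1) by auto
  have "0 < p * k" "a mod p < p" using less_mult_imp_pos[OF \<open>a < p * k\<close>] by simp_all
  from offset_local[OF this(2) d(1)] show ?thesis
  proof (elim disjE conjE)
    assume "0 \<le> int (a mod p) + d" "int (a mod p) + d < int p"
    with \<open>a < p * k\<close> have "int b = int a + d" unfolding d(2) by (rule shift_within_block)
    then have "int (b - a) = d" using assms(2) by (simp add: of_nat_diff)
    then show ?thesis using d(1) \<open>int (a mod p) + d < int p\<close> by auto
  next
    assume "d = -1"
    show ?thesis
    proof (cases "a = 0")
      case False
      then have "int b = int a + d"
        using \<open>a < p * k\<close> \<open>d = -1\<close> unfolding d(2) by (intro shift_eq_add) linarith+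
      with assms(2) \<open>d = -1\<close> show ?thesis by linarith
    qed (use d(2) \<open>d = -1\<close> shift_0_minus_1[OF \<open>0 < p * k\<close>] in simp)
  next
    assume "d = 1"
    show ?thesis
    proof (cases "a = p * k - 1")
      case False
      then have "int b = int a + d"
        using \<open>a < p * k\<close> \<open>d = 1\<close> unfolding d(2) by (intro shift_eq_add) linarith+
      with \<open>d = 1\<close> show ?thesis by linarith
    next
      case True
      then show ?thesis using d(2) \<open>d = 1\<close> assms(2) shift_last_1[OF \<open>0 < p * k\<close>] by simp
    qed
  qed
qed

lemma planar:
  fixes page :: "nat \<Rightarrow> bool"
  assumes no_crossing: "\<And>a c x y. a < c \<Longrightarrow> c < p \<Longrightarrow> x \<in> D a \<Longrightarrow> y \<in> D c \<Longrightarrow>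
      int c < int a + x \<Longrightarrow> int a + x < int c + y \<Longrightarrow> int c + y < int p \<Longrightarrow> page a \<noteq> page c"
  shows "planar (periodic_graph p D k)"
proof (subst periodic_graph_eq,
    rule planar_if_two_page_book_embedding[where page = "\<lambda>e. page (Min e mod p)"])
  let ?E = "snd (periodic_graph p D k)"
  fix e assume "e \<in> ?E"
  then obtain v d where "e = {v, shift (p * k) v d}" "v < p * k" "d \<in> D (v mod p)"
    by (rule periodic_graph_edgeE)
  then show "\<exists>u v. u < v \<and> e = {u, v}"
    using shift_neq_self[of v k d] by (metis insert_commute linorder_neq_iff)
next
  let ?E = "snd (periodic_graph p D k)"
  fix a b c d assume ab: "{a, b} \<in> ?E" and cd: "{c, d} \<in> ?E" and "a < c" "c < b" "b < d"
  have "d < p * k" using periodic_graph_edge_vertices[OF cd] by simp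
  then have local_ab: "int (b - a) \<in> D (a mod p) \<and> a mod p + (b - a) < p"
    using edge_cases[OF ab] \<open>a < c\<close> \<open>c < b\<close> \<open>b < d\<close> by auto
  have local_cd: "int (d - c) \<in> D (c mod p) \<and> c mod p + (d - c) < p"
    using edge_cases[OF cd] \<open>a < c\<close> \<open>c < b\<close> \<open>b < d\<close> by auto
  define ra rc x y where "ra = a mod p" and "rc = c mod p" and "x = b - a" and "y = d - c"
  have "ra + (c - a) < p" using local_ab \<open>c < b\<close> unfolding ra_def by linarith
  then have "rc = ra + (c - a)"
    using mod_add_within[of a p "c - a"] \<open>a < c\<close> unfolding ra_def rc_def by simp
  then have "ra < rc" "rc < p" "rc < ra + x" "ra + x < rc + y" "rc + y < p"
    using local_ab local_cd \<open>a < c\<close> \<open>c < b\<close> \<open>b < d\<close> unfolding ra_def rc_def x_def y_def by linarith+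
  moreover have "int x \<in> D ra" "int y \<in> D rc"
    using local_ab local_cd unfolding ra_def rc_def x_def y_def by simp_all
  ultimately have "page ra \<noteq> page rc"
    using no_crossing[of ra rc "int x" "int y"] by simp
  then have "page (a mod p) \<noteq> page (c mod p)" by (simp add: ra_def rc_def)
  moreover have "Min {a, b} = a" "Min {c, d} = c" using \<open>a < c\<close> \<open>c < b\<close> \<open>b < d\<close> by auto
  ultimately show "page (Min {a, b} mod p) \<noteq> page (Min {c, d} mod p)" by simp
qed

lemma neighbour_of_piece:
  assumes "q < k" "B \<subseteq> {..<p}" "r \<in> B" "{p * q + r, b} \<in> snd (periodic_graph p D k)"
    and closed: "\<And>d. d \<in> D r \<Longrightarrow> 0 \<le> int r + d \<and> nat (int r + d) \<in> B \<or> shift p r d \<in> H"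
  shows "b \<in> (\<lambda>r. p * q + r) ` B \<or> b < p * k \<and> b mod p \<in> H"
proof -
  let ?a = "p * q + r"
  have "r < p" using assms(2,3) by auto
  then have "?a < p * k" "?a mod p = r" using assms(1) by (simp_all add: block_index_less)
  then obtain d where d: "d \<in> D r" "b = shift (p * k) ?a d"
    using edge_iff[of ?a k b] assms(4) by auto
  from closed[OF d(1)] show ?thesis
  proof
    assume r_d: "0 \<le> int r + d \<and> nat (int r + d) \<in> B"
    then have "int r + d < int p" using assms(2) by auto
    then have "int b = int ?a + d"
      unfolding d(2) using \<open>?a < p * k\<close> \<open>?a mod p = r\<close> r_d by (intro shift_within_block) simp_all
    then have "b = p * q + nat (int r + d)" using r_d by linarith
    then show ?thesis using r_d by auto
  next
    assume "shift p r d \<in> H"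
    then have "b mod p \<in> H"
      using d(2) \<open>?a mod p = r\<close> shift_mod[of p k ?a d] \<open>r < p\<close> assms(1) by simp
    moreover have "b < p * k" unfolding d(2) using \<open>?a < p * k\<close> by (intro shift_less) linarith
    ultimately show ?thesis by simp
  qed
qed

lemma no_Lambda_factor:
  assumes "0 < k" "finite H" "finite J"
    and pieces: "\<And>j. j \<in> J \<Longrightarrow> B j \<subseteq> {..<p} - H"
    and disjoint: "\<And>j j'. j \<in> J \<Longrightarrow> j' \<in> J \<Longrightarrow> j \<noteq> j' \<Longrightarrow> B j \<inter> B j' = {}"
    and closed: "\<And>j r d. j \<in> J \<Longrightarrow> r \<in> B j \<Longrightarrow> d \<in> D r \<Longrightarrow>
      0 \<le> int r + d \<and> nat (int r + d) \<in> B j \<or> shift p r d \<in> H"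
    and deficient: "2 * card H < (\<Sum>j\<in>J. card (B j) mod 3)"
  shows "\<not> has_Lambda_factor (periodic_graph p D k)"
proof (subst periodic_graph_eq, rule no_Lambda_factor_if_deficient)
  let ?S = "{v \<in> {..<p * k}. v mod p \<in> H}" and ?I = "{..<k} \<times> J"
  let ?P = "\<lambda>(q, j). (\<lambda>r. p * q + r) ` B j"
  show "finite {..<p * k}" "?S \<subseteq> {..<p * k}" "finite ?I" using \<open>finite J\<close> by auto
  show "?P i \<subseteq> {..<p * k} - ?S" if i: "i \<in> ?I" for i
  proof -
    obtain q j where "i = (q, j)" "q < k" "j \<in> J" using i by (cases i) auto
    then show ?thesis using pieces[OF \<open>j \<in> J\<close>] by (auto simp: block_index_less)
  qed
  show "?P i \<inter> ?P i' = {}" if i: "i \<in> ?I" "i' \<in> ?I" "i \<noteq> i'" for i i'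
  proof -
    obtain q j q' j' where ij: "i = (q, j)" "i' = (q', j')" "j \<in> J" "j' \<in> J"
      using i by (cases i, cases i') auto
    have "q = q' \<and> r = r'" if "r \<in> B j" "r' \<in> B j'" "p * q + r = p * q' + r'" for r r'
      using that pieces ij(3,4) block_index_eq_iff[of r p r' q q'] by blast
    then show ?thesis using disjoint[OF ij(3,4)] \<open>i \<noteq> i'\<close> ij(1,2) by auto
  qed
  show "b \<in> ?P i \<union> ?S" if i: "i \<in> ?I" and "{a, b} \<in> snd (periodic_graph p D k)" "a \<in> ?P i" for i a b
  proof -
    obtain q j r where "i = (q, j)" "q < k" "j \<in> J" "r \<in> B j" "a = p * q + r"
      using i \<open>a \<in> ?P i\<close> by (cases i) auto
    then show ?thesis
      using neighbour_of_piece[of q k "B j" r b H] pieces closed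
        \<open>{a, b} \<in> snd (periodic_graph p D k)\<close>
      by auto
  qed
  have "2 * card ?S \<le> 2 * (k * card H)"
    using card_residues_le[OF \<open>finite H\<close>, of p k] by simp
  also have "\<dots> < k * (\<Sum>j\<in>J. card (B j) mod 3)"
    using deficient \<open>0 < k\<close> by simp
  also have "\<dots> = (\<Sum>i\<in>?I. card (?P i) mod 3)"
    by (rule sum_card_translates_mod_3[symmetric])
  finally show "2 * card ?S < (\<Sum>i\<in>?I. card (?P i) mod 3)" .
qed

end

text \<open>Residues 0 and 17 are the hubs; 1--8, 9--16 and 18--25 are three copies of the same
  8-vertex gadget, a path with chords 1--4, 2--7, 3--6, 5--8, whose ends are joined to the hubs
  0 and 17, 0 and 17, and 17 and the 0 of the next block.\<close>

definition block_offsets :: "nat \<Rightarrow> int set" where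
  "block_offsets r = [{-1, 1, 9}, {-1, 1, 3}, {-1, 1, 5}, {-1, 1, 3}, {-1, 1, -3}, {-1, 1, 3},
     {-1, 1, -3}, {-1, 1, -5}, {-1, 9, -3}, {-9, 1, 3}, {-1, 1, 5}, {-1, 1, 3}, {-1, 1, -3},
     {-1, 1, 3}, {-1, 1, -3}, {-1, 1, -5}, {-1, 1, -3}, {-1, 1, -9}, {-1, 1, 3}, {-1, 1, 5},
     {-1, 1, 3}, {-1, 1, -3}, {-1, 1, 3}, {-1, 1, -3}, {-1, 1, -5}, {-1, 1, -3}] ! r"

definition block_page :: "nat \<Rightarrow> bool" where
  "block_page r \<longleftrightarrow> r \<in> {0, 1, 5, 9, 13, 18, 22}"

lemma all_less_iff_list_all_upt: "(\<forall>r<n. P r) \<longleftrightarrow> list_all P [0..<n]"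
  by (auto simp: list_all_iff)

lemmas block_tables = block_offsets_def block_page_def upt_rec shift_def

lemma block_offsets_uminus: "\<forall>r<26. \<forall>d\<in>block_offsets r. - d \<in> block_offsets (shift 26 r d)"
  unfolding all_less_iff_list_all_upt by (simp add: block_tables)

lemma block_offsets_short: "\<forall>r<26. \<forall>d\<in>block_offsets r. d \<noteq> 0 \<and> 2 * \<bar>d\<bar> < 26 \<and> odd d"
  unfolding all_less_iff_list_all_upt by (simp add: block_tables)

lemma block_offsets_local:
  "\<forall>r<26. \<forall>d\<in>block_offsets r. 0 \<le> int r + d \<and> int r + d < 26 \<or> r = 0 \<and> d = -1 \<or> r = 25 \<and> d = 1"
  unfolding all_less_iff_list_all_upt by (simp add: block_tables)

lemma block_offsets_card:
  "\<forall>r<26. card (block_offsets r) = 3 \<and> (\<exists>d\<in>block_offsets r. d < 0) \<and> (\<exists>d\<in>block_offsets r. 0 < d)"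
  unfolding all_less_iff_list_all_upt by (simp add: block_tables)

lemma block_offsets_gadgets:
  "\<forall>r<26. \<forall>d\<in>block_offsets r. \<forall>j\<in>{1, 9, 18}.
     r \<in> {j..j + 7} \<longrightarrow> 0 \<le> int r + d \<and> nat (int r + d) \<in> {j..j + 7} \<or> shift 26 r d \<in> {0, 17}"
  unfolding all_less_iff_list_all_upt by (simp add: block_tables)

lemma block_page_crossing:
  "\<forall>a<26. \<forall>c<26. \<forall>x\<in>block_offsets a. \<forall>y\<in>block_offsets c.
     a < c \<longrightarrow> int c < int a + x \<longrightarrow> int a + x < int c + y \<longrightarrow> int c + y < 26 \<longrightarrow>
     block_page a \<noteq> block_page c"
  unfolding all_less_iff_list_all_upt by (simp add: block_tables)

interpretation block: periodic_pattern 26 block_offsets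
proof
  fix r d assume "r < 26" "d \<in> block_offsets r"
  then show "- d \<in> block_offsets (shift 26 r d)" "d \<noteq> 0 \<and> 2 * \<bar>d\<bar> < int 26"
    "0 \<le> int r + d \<and> int r + d < int 26 \<or> r = 0 \<and> d = -1 \<or> r = 26 - 1 \<and> d = 1"
    using block_offsets_uminus block_offsets_short block_offsets_local by simp_all
qed

lemma block_graph_properties:
  assumes "0 < k"
  shows "simple_graph (periodic_graph 26 block_offsets k) \<and>
    two_connected (periodic_graph 26 block_offsets k) \<and> cubic (periodic_graph 26 block_offsets k) \<and>
    bipartite (periodic_graph 26 block_offsets k) \<and> planar (periodic_graph 26 block_offsets k) \<and>
    \<not> has_Lambda_factor (periodic_graph 26 block_offsets k)"
proof (intro conjI)
  show "simple_graph (periodic_graph 26 block_offsets k)" by (rule block.simple)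
  show "cubic (periodic_graph 26 block_offsets k)"
    using block_offsets_card by (intro block.cubic) simp
  show "bipartite (periodic_graph 26 block_offsets k)"
    using block_offsets_short by (intro block.bipartite) simp_all
  show "two_connected (periodic_graph 26 block_offsets k)"
    using block_offsets_card assms by (intro block.two_connected) (simp_all add: block_offsets_def)
  show "planar (periodic_graph 26 block_offsets k)"
    using block_page_crossing by (intro block.planar[where page = block_page]) simp
  show "\<not> has_Lambda_factor (periodic_graph 26 block_offsets k)"
  proof (rule block.no_Lambda_factor[where H = "{0, 17}" and J = "{1, 9, 18}"
        and B = "\<lambda>j. {j..j + 7}"])
    fix j r d assume j: "j \<in> {1, 9, 18}" and "r \<in> {j..j + 7}" "d \<in> block_offsets r"
    moreover have "r < 26" using j \<open>r \<in> {j..j + 7}\<close> by auto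
    ultimately show "0 \<le> int r + d \<and> nat (int r + d) \<in> {j..j + 7} \<or> shift 26 r d \<in> {0, 17}"
      using block_offsets_gadgets[rule_format, OF \<open>r < 26\<close> \<open>d \<in> block_offsets r\<close> j \<open>r \<in> {j..j + 7}\<close>]
      by blast
  next
    fix j j' :: nat assume "j \<in> {1, 9, 18}" "j' \<in> {1, 9, 18}" "j \<noteq> j'"
    then show "{j..j + 7} \<inter> {j'..j' + 7} = {}" by auto
  qed (use assms in auto)
qed

lemma graph_iso_card_eq: "graph_iso G H \<Longrightarrow> card (fst G) = card (fst H)"
  unfolding graph_iso_def by (metis bij_betw_same_card)

lemma infinite_non_isomorphic_family:
  fixes G :: "nat \<Rightarrow> 'a graph"
  assumes "inj (\<lambda>j. card (fst (G j)))"
  shows "infinite (range G)" and "\<forall>H\<in>range G. \<forall>H'\<in>range G. H \<noteq> H' \<longrightarrow> \<not> graph_iso H H'"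
proof -
  have "inj G" using assms by (auto simp: inj_def)
  then show "infinite (range G)" by (rule range_inj_infinite)
  show "\<forall>H\<in>range G. \<forall>H'\<in>range G. H \<noteq> H' \<longrightarrow> \<not> graph_iso H H'"
  proof (intro ballI impI notI)
    fix H H' assume "H \<in> range G" "H' \<in> range G" "H \<noteq> H'" "graph_iso H H'"
    then obtain j j' where "H = G j" "H' = G j'" "card (fst (G j)) = card (fst (G j'))"
      using graph_iso_card_eq by blast
    then show False using injD[OF assms, of j j'] \<open>H \<noteq> H'\<close> by simp
  qed
qed

theorem mainTheorem1:
  shows "\<exists>S :: nat graph set. infinite S \<and>
    (\<forall>G\<in>S. simple_graph G \<and> card (fst G) mod 6 = 0 \<and> two_connected G \<and> cubic G \<and>
            bipartite G \<and> planar G \<and> \<not> has_Lambda_factor G) \<and>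
    (\<forall>G\<in>S. \<forall>H\<in>S. G \<noteq> H \<longrightarrow> \<not> graph_iso G H)"
proof -
  define G where "G j = periodic_graph 26 block_offsets (3 * Suc j)" for j
  have card_G: "card (fst (G j)) = 78 * Suc j" for j
    by (simp add: G_def)
  then have "inj (\<lambda>j. card (fst (G j)))"
    by (intro injI) simp
  note family = infinite_non_isomorphic_family[OF this]
  have properties: "simple_graph H \<and> card (fst H) mod 6 = 0 \<and> two_connected H \<and> cubic H \<and>
      bipartite H \<and> planar H \<and> \<not> has_Lambda_factor H" if "H \<in> range G" for H
  proof -
    obtain j where "H = G j" using \<open>H \<in> range G\<close> by blast
    then show ?thesis
      using block_graph_properties[of "3 * Suc j"] card_G[of j] unfolding G_def by simp
  qed
  show ?thesis
  proof (intro exI[of _ "range G"] conjI)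
    show "\<forall>H\<in>range G. simple_graph H \<and> card (fst H) mod 6 = 0 \<and> two_connected H \<and> cubic H \<and>
      bipartite H \<and> planar H \<and> \<not> has_Lambda_factor H"
      using properties by (rule ballI)
  qed (fact family)+
qed

end
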